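(* Let $\mathcal{H}_C=\mathcal{H}_{A_1}\oplus\cdots\oplus\mathcal{H}_{A_n}$ be a finite-dimensional Hilbert space decomposed into mutually orthogonal subspaces with orthogonal projectors $\hat P_{A_\ell A_\ell}$, and let $\Phi_{CC}$ be a quantum channel on $\mathcal{H}_C$ with Kraus set $\{\hat M^{(j)}_{CC}\}_j$. Then $\Phi_{CC}$ admits the multi-block PCDS structure if and only if $\hat M^{(j)}_{CC}=\bigoplus_{\ell=1}^n\hat M^{(j)}_{A_\ell A_\ell}$ for all $j$, equivalently $\hat M^{(j)}_{A_\ell A_{\ell'}}=0$ for all $j$ and all $\ell\ne\ell'$, where $\hat M^{(j)}_{A_\ell A_{\ell'}}=\hat P_{A_\ell A_\ell}\hat M^{(j)}_{CC}\hat P_{A_{\ell'}A_{\ell'}}$.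
   Context: For an operator $\hat\Theta_{CC}$ on $\mathcal{H}_C$ let $\hat\Theta_{A_\ell A_{\ell'}}=\hat P_{A_\ell A_\ell}\hat\Theta_{CC}\hat P_{A_{\ell'}A_{\ell'}}$. A channel $\Phi_{CC}$ has the multi-block PCDS structure if there are linear maps $\Phi_{A_\ell A_\ell}$ on operators $\mathcal{H}_{A_\ell}\to\mathcal{H}_{A_\ell}$ and $\Phi^{(off)}_{A_\ell A_{\ell'}}$ ($\ell\neq\ell'$) on operators $\mathcal{H}_{A_{\ell'}}\to\mathcal{H}_{A_\ell}$ such that $\Phi_{CC}[\hat\Theta_{CC}]=\sum_{\ell}\Phi_{A_\ell A_\ell}[\hat\Theta_{A_\ell A_\ell}]+\sum_{\ell\neq\ell'}\Phi^{(off)}_{A_\ell A_{\ell'}}[\hat\Theta_{A_\ell A_{\ell'}}]$ for all $\hat\Theta_{CC}$. *)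

theory Defs
  imports "HOL-Analysis.Analysis"
begin

type_synonym 'd op = "complex^'d^'d"

definition adj :: "'d::finite op \<Rightarrow> 'd op" where
  "adj M = (\<chi> i j. cnj (M $ j $ i))"

definition cscale :: "complex \<Rightarrow> 'd::finite op \<Rightarrow> 'd op" where
  "cscale c M = (\<chi> i j. c * M $ i $ j)"

text \<open>Orthogonal decomposition H_C = H_A1 + ... + H_An given by orthogonal projectors P 0, ..., P (n-1).\<close>
definition orth_decomp :: "nat \<Rightarrow> (nat \<Rightarrow> 'd::finite op) \<Rightarrow> bool" where
  "orth_decomp n P \<longleftrightarrow>
     (\<forall>l<n. adj (P l) = P l \<and> P l ** P l = P l) \<and>
     (\<forall>l<n. \<forall>l'<n. l \<noteq> l' \<longrightarrow> P l ** P l' = 0) \<and>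
     (\<Sum>l<n. P l) = mat 1"

text \<open>Operators from H_{A_l'} to H_{A_l}, embedded as operators on H_C.\<close>
definition block_ops :: "(nat \<Rightarrow> 'd::finite op) \<Rightarrow> nat \<Rightarrow> nat \<Rightarrow> 'd op set" where
  "block_ops P l l' = {X. P l ** X ** P l' = X}"

definition lin_map_between :: "'d::finite op set \<Rightarrow> 'd op set \<Rightarrow> ('d op \<Rightarrow> 'd op) \<Rightarrow> bool" where
  "lin_map_between S T F \<longleftrightarrow>
     (\<forall>X\<in>S. F X \<in> T) \<and>
     (\<forall>X\<in>S. \<forall>Y\<in>S. F (X + Y) = F X + F Y) \<and>
     (\<forall>c. \<forall>X\<in>S. F (cscale c X) = cscale c (F X))"

definition block :: "(nat \<Rightarrow> 'd::finite op) \<Rightarrow> 'd op \<Rightarrow> nat \<Rightarrow> nat \<Rightarrow> 'd op" where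
  "block P Theta l l' = P l ** Theta ** P l'"

definition multi_block_PCDS :: "nat \<Rightarrow> (nat \<Rightarrow> 'd::finite op) \<Rightarrow> ('d op \<Rightarrow> 'd op) \<Rightarrow> bool" where
  "multi_block_PCDS n P Phi \<longleftrightarrow>
     (\<exists>Phi_diag :: nat \<Rightarrow> 'd op \<Rightarrow> 'd op. \<exists>Phi_off :: nat \<Rightarrow> nat \<Rightarrow> 'd op \<Rightarrow> 'd op.
        (\<forall>l<n. lin_map_between (block_ops P l l) (block_ops P l l) (Phi_diag l)) \<and>
        (\<forall>l<n. \<forall>l'<n. l \<noteq> l' \<longrightarrow>
            lin_map_between (block_ops P l l') (block_ops P l l') (Phi_off l l')) \<and>
        (\<forall>Theta. Phi Theta =
            (\<Sum>l<n. Phi_diag l (block P Theta l l)) +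
            (\<Sum>l<n. \<Sum>l'\<in>{..<n} - {l}. Phi_off l l' (block P Theta l l'))))"

definition kraus_channel :: "'j set \<Rightarrow> ('j \<Rightarrow> 'd::finite op) \<Rightarrow> ('d op \<Rightarrow> 'd op) \<Rightarrow> bool" where
  "kraus_channel J M Phi \<longleftrightarrow> finite J \<and>
     (\<Sum>j\<in>J. adj (M j) ** M j) = mat 1 \<and>
     (\<forall>Theta. Phi Theta = (\<Sum>j\<in>J. M j ** Theta ** adj (M j)))"

end

theory Submission
  imports Defs
begin

text \<open>
  If every Kraus operator commutes with the projectors \<open>P l\<close>, then the channel commutes with
  taking blocks, so the channel itself can serve as all the block maps. Conversely, under the
  PCDS structure \<open>Phi (P l)\<close> is supported on the block \<open>(l, l)\<close>. Its \<open>(m, m)\<close> block,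
  for \<open>m \<noteq> l\<close>, is \<open>\<Sum>j. B\<^sub>j B\<^sub>j\<^sup>\<dagger>\<close> with \<open>B\<^sub>j\<close> the \<open>(m, l)\<close> block of the Kraus
  operator \<open>M j\<close>; a vanishing sum of positive semidefinite matrices forces every \<open>B\<^sub>j\<close> to vanish.
\<close>

lemma matrix_add_rdistrib: "((A :: 'a::semiring_1^'n^'m) + B) ** C = A ** C + B ** C"
  by (vector matrix_matrix_mult_def sum.distrib[symmetric] field_simps)

lemma matrix_sum_mult_distrib:
  "(\<Sum>i\<in>S. f i :: 'a::semiring_1^'n^'m) ** B = (\<Sum>i\<in>S. f i ** B)"
  by (induct S rule: infinite_finite_induct) (auto simp: matrix_add_rdistrib)

lemma matrix_mult_sum_distrib:
  "(B :: 'a::semiring_1^'n^'m) ** (\<Sum>i\<in>S. f i) = (\<Sum>i\<in>S. B ** f i)"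
  by (induct S rule: infinite_finite_induct) (auto simp: matrix_add_ldistrib)

lemma adj_matrix_mult: "adj ((A :: 'd::finite op) ** B) = adj B ** adj A"
  by (simp add: adj_def matrix_matrix_mult_def vec_eq_iff mult.commute)

lemma cscale_matrix_mult_left: "cscale c (A :: 'd::finite op) ** B = cscale c (A ** B)"
  by (simp add: cscale_def matrix_matrix_mult_def vec_eq_iff sum_distrib_left algebra_simps)

lemma cscale_matrix_mult_right: "(A :: 'd::finite op) ** cscale c B = cscale c (A ** B)"
  by (simp add: cscale_def matrix_matrix_mult_def vec_eq_iff sum_distrib_left algebra_simps)

lemma cscale_sum: "cscale c (\<Sum>i\<in>S. f i :: 'd::finite op) = (\<Sum>i\<in>S. cscale c (f i))"
  by (induct S rule: infinite_finite_induct) (auto simp: cscale_def vec_eq_iff algebra_simps)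

lemma mult_adj_diagonal:
  "(A ** adj A) $ i $ i = of_real (\<Sum>k\<in>UNIV. (cmod (A $ i $ k))\<^sup>2)"
  by (simp add: matrix_matrix_mult_def adj_def complex_norm_square del: of_real_power)

lemma sum_mult_adj_eq_0_imp_eq_0:
  assumes "finite J" and "(\<Sum>j\<in>J. A j ** adj (A j :: 'd::finite op)) = 0" and "j \<in> J"
  shows "A j = 0"
proof -
  have "(\<Sum>j\<in>J. \<Sum>k\<in>UNIV. (cmod (A j $ i $ k))\<^sup>2) = 0" for i
  proof -
    have "complex_of_real (\<Sum>j\<in>J. \<Sum>k\<in>UNIV. (cmod (A j $ i $ k))\<^sup>2)
        = (\<Sum>j\<in>J. A j ** adj (A j)) $ i $ i"
      by (simp add: mult_adj_diagonal)
    also have "\<dots> = 0"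
      using assms(2) by simp
    finally show ?thesis
      by (simp only: of_real_eq_0_iff)
  qed
  then have "(\<Sum>k\<in>UNIV. (cmod (A j $ i $ k))\<^sup>2) = 0" for i
    using assms(1,3) by (simp add: sum_nonneg sum_nonneg_eq_0_iff)
  then have "cmod (A j $ i $ k) = 0" for i k
    by (simp add: sum_nonneg_eq_0_iff)
  then show ?thesis
    by (simp add: vec_eq_iff)
qed

lemma sum_split_diagonal:
  assumes "finite S"
  shows "(\<Sum>l\<in>S. \<Sum>l'\<in>S. f l l') = (\<Sum>l\<in>S. f l l) + (\<Sum>l\<in>S. \<Sum>l'\<in>S - {l}. f l l')"
  using assms by (simp add: sum.remove sum.distrib)

lemma block_sum: "block P (\<Sum>i\<in>S. f i) l l' = (\<Sum>i\<in>S. block P (f i) l l')"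
  by (simp add: block_def matrix_sum_mult_distrib matrix_mult_sum_distrib)

lemma lin_map_between_zero:
  assumes "lin_map_between S T F" and "0 \<in> S"
  shows "F 0 = 0"
proof -
  have "F (0 + 0) = F 0 + F 0"
    using assms unfolding lin_map_between_def by blast
  then show ?thesis
    by simp
qed

lemma kraus_channel_additive:
  assumes "kraus_channel J M Phi"
  shows "Modules.additive Phi"
  using assms by unfold_locales
    (simp add: kraus_channel_def matrix_add_ldistrib matrix_add_rdistrib sum.distrib)

lemma kraus_channel_cscale:
  assumes "kraus_channel J M Phi"
  shows "Phi (cscale c X) = cscale c (Phi X)"
  using assms
  by (simp add: kraus_channel_def cscale_matrix_mult_left cscale_matrix_mult_right cscale_sum)

context
  fixes n :: nat and P :: "nat \<Rightarrow> 'd::finite op"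
  assumes decomp: "orth_decomp n P"
begin

lemma projector_adj: "l < n \<Longrightarrow> adj (P l) = P l"
  and projector_idem: "l < n \<Longrightarrow> P l ** P l = P l"
  and projectors_orth: "l < n \<Longrightarrow> l' < n \<Longrightarrow> l \<noteq> l' \<Longrightarrow> P l ** P l' = 0"
  and sum_projectors: "(\<Sum>l<n. P l) = mat 1"
  using decomp unfolding orth_decomp_def by auto

lemma projector_mult_block:
  assumes "l < n" and "m < n"
  shows "P l ** block P X m m' = (if l = m then block P X m m' else 0)"
  using assms projector_idem projectors_orth by (simp add: block_def matrix_mul_assoc)

lemma block_mult_projector:
  assumes "l < n" and "m' < n"
  shows "block P X m m' ** P l = (if l = m' then block P X m m' else 0)"
  using assms projector_idem projectors_orth
  by (simp add: block_def flip: matrix_mul_assoc)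

lemma block_block:
  assumes "l < n" "l' < n" "m < n" "m' < n"
  shows "block P (block P X m m') l l' = (if l = m \<and> l' = m' then block P X m m' else 0)"
  using assms
  by (simp add: block_def[of P "block P X m m'"] projector_mult_block block_mult_projector)

lemma block_in_block_ops: "l < n \<Longrightarrow> l' < n \<Longrightarrow> block P X l l' \<in> block_ops P l l'"
  by (simp add: block_ops_def block_block flip: block_def)

lemma sum_blocks: "(\<Sum>l<n. \<Sum>l'<n. block P X l l') = X"
proof -
  have "X = (\<Sum>l<n. P l) ** X ** (\<Sum>l'<n. P l')"
    by (simp add: sum_projectors)
  also have "\<dots> = (\<Sum>l'<n. \<Sum>l<n. P l ** X ** P l')"
    by (simp add: matrix_sum_mult_distrib matrix_mult_sum_distrib)
  also have "\<dots> = (\<Sum>l<n. \<Sum>l'<n. P l ** X ** P l')"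
    by (rule sum.swap)
  finally show ?thesis
    unfolding block_def by (rule sym)
qed

lemma block_diagonal_iff_off_diagonal_blocks_zero:
  "A = (\<Sum>l<n. block P A l l) \<longleftrightarrow> (\<forall>l<n. \<forall>l'<n. l \<noteq> l' \<longrightarrow> block P A l l' = 0)"
proof
  assume diagonal: "A = (\<Sum>l<n. block P A l l)"
  show "\<forall>l<n. \<forall>l'<n. l \<noteq> l' \<longrightarrow> block P A l l' = 0"
  proof (intro allI impI)
    fix l l' assume "l < n" "l' < n" "l \<noteq> l'"
    then have "block P (\<Sum>m<n. block P A m m) l l' = 0"
      by (auto simp: block_sum block_block intro: sum.neutral)
    with diagonal show "block P A l l' = 0"
      by simp
  qed
next
  assume "\<forall>l<n. \<forall>l'<n. l \<noteq> l' \<longrightarrow> block P A l l' = 0"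
  then have "(\<Sum>l<n. \<Sum>l'\<in>{..<n} - {l}. block P A l l') = 0"
    by (simp add: sum.neutral)
  then show "A = (\<Sum>l<n. block P A l l)"
    using sum_blocks[of A] by (simp add: sum_split_diagonal)
qed

lemma block_diagonal_projector_commute:
  assumes "A = (\<Sum>m<n. block P A m m)" and "l < n"
  shows "P l ** A = A ** P l"
proof -
  have "P l ** (\<Sum>m<n. block P A m m) = block P A l l"
    using assms(2) by (simp add: matrix_mult_sum_distrib projector_mult_block)
  moreover have "(\<Sum>m<n. block P A m m) ** P l = block P A l l"
    using assms(2) by (simp add: matrix_sum_mult_distrib block_mult_projector)
  ultimately show ?thesis
    using assms(1) by simp
qed

lemma kraus_channel_block_commute:
  assumes "kraus_channel J M Phi"
    and commute: "\<forall>j\<in>J. \<forall>l<n. P l ** M j = M j ** P l"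
    and "l < n" "l' < n"
  shows "block P (Phi X) l l' = Phi (block P X l l')"
proof -
  have "P l ** (M j ** X ** adj (M j)) ** P l' = M j ** (P l ** X ** P l') ** adj (M j)"
    if "j \<in> J" for j
  proof -
    have "adj (M j) ** P l' = adj (P l' ** M j)"
      using \<open>l' < n\<close> by (simp add: adj_matrix_mult projector_adj)
    also have "\<dots> = P l' ** adj (M j)"
      using commute \<open>j \<in> J\<close> \<open>l' < n\<close> by (simp add: adj_matrix_mult projector_adj)
    finally have "adj (M j) ** P l' = P l' ** adj (M j)" .
    moreover have "P l ** M j = M j ** P l"
      using commute \<open>j \<in> J\<close> \<open>l < n\<close> by blast
    ultimately have "(P l ** M j) ** X ** (adj (M j) ** P l')
        = (M j ** P l) ** X ** (P l' ** adj (M j))"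
      by simp
    then show ?thesis
      by (simp add: matrix_mul_assoc)
  qed
  then show ?thesis
    using assms(1)
    by (simp add: kraus_channel_def block_def matrix_sum_mult_distrib matrix_mult_sum_distrib)
qed

lemma multi_block_PCDS_if_block_commute:
  assumes "Modules.additive Phi"
    and "\<And>c X. Phi (cscale c X) = cscale c (Phi X)"
    and block_commute:
      "\<And>X l l'. l < n \<Longrightarrow> l' < n \<Longrightarrow> block P (Phi X) l l' = Phi (block P X l l')"
  shows "multi_block_PCDS n P Phi"
proof -
  have linear: "lin_map_between (block_ops P l l') (block_ops P l l') Phi"
    if "l < n" "l' < n" for l l'
  proof -
    have "Phi X \<in> block_ops P l l'" if "X \<in> block_ops P l l'" for X
    proof -
      have "block P (Phi X) l l' = Phi X"
        using that block_commute[OF \<open>l < n\<close> \<open>l' < n\<close>, of X]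
        by (simp add: block_ops_def block_def)
      then show ?thesis
        using block_in_block_ops[OF \<open>l < n\<close> \<open>l' < n\<close>, of "Phi X"] by simp
    qed
    then show ?thesis
      using assms(2) by (simp add: lin_map_between_def Modules.additive.add[OF assms(1)])
  qed
  have decomposition:
    "Phi X = (\<Sum>l<n. Phi (block P X l l)) + (\<Sum>l<n. \<Sum>l'\<in>{..<n} - {l}. Phi (block P X l l'))"
    for X
  proof -
    have "Phi X = Phi (\<Sum>l<n. \<Sum>l'<n. block P X l l')"
      by (simp only: sum_blocks)
    also have "\<dots> = (\<Sum>l<n. \<Sum>l'<n. Phi (block P X l l'))"
      by (simp add: Modules.additive.sum[OF assms(1)])
    finally have "Phi X = (\<Sum>l<n. \<Sum>l'<n. Phi (block P X l l'))" .
    then show ?thesis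
      by (simp add: sum_split_diagonal)
  qed
  show ?thesis
    unfolding multi_block_PCDS_def
    by (intro exI[of _ "\<lambda>_. Phi"] exI[of _ "\<lambda>_ _. Phi"] conjI allI impI linear decomposition)
qed

lemma projector_eq_block: "l < n \<Longrightarrow> P l = block P (mat 1) l l"
  by (simp add: block_def projector_idem)

lemma multi_block_PCDS_projector_image:
  assumes "multi_block_PCDS n P Phi" and "l < n"
  shows "Phi (P l) \<in> block_ops P l l"
proof -
  obtain F G where
    F: "\<forall>m<n. lin_map_between (block_ops P m m) (block_ops P m m) (F m)" and
    G: "\<forall>m<n. \<forall>m'<n. m \<noteq> m' \<longrightarrow>
      lin_map_between (block_ops P m m') (block_ops P m m') (G m m')" and
    Phi: "Phi (P l) = (\<Sum>m<n. F m (block P (P l) m m)) +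
      (\<Sum>m<n. \<Sum>m'\<in>{..<n} - {m}. G m m' (block P (P l) m m'))"
    using assms(1) unfolding multi_block_PCDS_def by blast
  have blocks: "block P (P l) m m' = (if m = l \<and> m' = l then P l else 0)"
    if "m < n" "m' < n" for m m'
    using that assms(2) by (simp add: projector_eq_block block_block)
  have zero: "0 \<in> block_ops P m m'" for m m'
    by (simp add: block_ops_def)
  have F0: "F m 0 = 0" if "m < n" for m
    using lin_map_between_zero[OF F[rule_format, OF that] zero] .
  have G0: "G m m' 0 = 0" if "m < n" "m' < n" "m \<noteq> m'" for m m'
    using lin_map_between_zero[OF G[rule_format, OF that] zero] .
  have "(\<Sum>m<n. F m (block P (P l) m m)) = (\<Sum>m<n. if m = l then F l (P l) else 0)"
    by (intro sum.cong) (simp_all add: blocks F0)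
  moreover have "(\<Sum>m<n. \<Sum>m'\<in>{..<n} - {m}. G m m' (block P (P l) m m')) = 0"
    by (intro sum.neutral ballI) (auto simp: blocks G0)
  ultimately have "Phi (P l) = F l (P l)"
    using Phi assms(2) by simp
  moreover have "P l \<in> block_ops P l l"
    using assms(2) by (simp add: block_ops_def projector_idem)
  then have "F l (P l) \<in> block_ops P l l"
    using F assms(2) unfolding lin_map_between_def by blast
  ultimately show ?thesis
    by simp
qed

lemma kraus_channel_projector_block:
  assumes "kraus_channel J M Phi" and "m < n" and "l < n"
  shows "block P (Phi (P l)) m m = (\<Sum>j\<in>J. block P (M j) m l ** adj (block P (M j) m l))"
proof -
  have "block P (M j ** P l ** adj (M j)) m m = block P (M j) m l ** adj (block P (M j) m l)"
    for j
  proof -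
    have "block P (M j) m l ** adj (block P (M j) m l)
        = (P m ** M j ** P l) ** (P l ** adj (M j) ** P m)"
      using assms(2,3) by (simp add: block_def adj_matrix_mult projector_adj matrix_mul_assoc)
    also have "\<dots> = P m ** (M j ** (P l ** P l) ** adj (M j)) ** P m"
      by (simp only: matrix_mul_assoc)
    also have "\<dots> = block P (M j ** P l ** adj (M j)) m m"
      using assms(3) by (simp add: block_def projector_idem)
    finally show ?thesis
      by (rule sym)
  qed
  then show ?thesis
    using assms(1) by (simp add: kraus_channel_def block_sum)
qed

lemma kraus_channel_multi_block_PCDS_iff:
  assumes "kraus_channel J M Phi"
  shows "multi_block_PCDS n P Phi \<longleftrightarrow>
    (\<forall>j\<in>J. \<forall>l<n. \<forall>l'<n. l \<noteq> l' \<longrightarrow> block P (M j) l l' = 0)"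
proof
  assume PCDS: "multi_block_PCDS n P Phi"
  show "\<forall>j\<in>J. \<forall>l<n. \<forall>l'<n. l \<noteq> l' \<longrightarrow> block P (M j) l l' = 0"
  proof (intro ballI allI impI)
    fix j l l' assume "j \<in> J" "l < n" "l' < n" "l \<noteq> l'"
    have image: "block P (Phi (P l')) l' l' = Phi (P l')"
      using multi_block_PCDS_projector_image[OF PCDS \<open>l' < n\<close>]
      by (simp add: block_ops_def block_def)
    have "block P (Phi (P l')) l l = block P (block P (Phi (P l')) l' l') l l"
      by (simp only: image)
    also have "\<dots> = 0"
      using \<open>l < n\<close> \<open>l' < n\<close> \<open>l \<noteq> l'\<close> by (simp add: block_block)
    finally have "(\<Sum>i\<in>J. block P (M i) l l' ** adj (block P (M i) l l')) = 0"
      using kraus_channel_projector_block[OF assms \<open>l < n\<close> \<open>l' < n\<close>] by simp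
    moreover have "finite J"
      using assms by (simp add: kraus_channel_def)
    ultimately show "block P (M j) l l' = 0"
      using sum_mult_adj_eq_0_imp_eq_0[of J "\<lambda>i. block P (M i) l l'" j] \<open>j \<in> J\<close> by simp
  qed
next
  assume "\<forall>j\<in>J. \<forall>l<n. \<forall>l'<n. l \<noteq> l' \<longrightarrow> block P (M j) l l' = 0"
  then have "\<forall>j\<in>J. M j = (\<Sum>l<n. block P (M j) l l)"
    by (simp add: block_diagonal_iff_off_diagonal_blocks_zero)
  then have "\<forall>j\<in>J. \<forall>l<n. P l ** M j = M j ** P l"
    by (blast intro: block_diagonal_projector_commute)
  then show "multi_block_PCDS n P Phi"
    using assms
    by (intro multi_block_PCDS_if_block_commute kraus_channel_additive kraus_channel_cscale
        kraus_channel_block_commute)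
qed

end

theorem theorem3:
  fixes n :: nat and P :: "nat \<Rightarrow> complex^'d::finite^'d"
    and J :: "'j set" and M :: "'j \<Rightarrow> complex^'d^'d"
    and Phi :: "complex^'d^'d \<Rightarrow> complex^'d^'d"
  assumes "orth_decomp n P"
    and "kraus_channel J M Phi"
  shows "(multi_block_PCDS n P Phi \<longleftrightarrow>
            (\<forall>j\<in>J. M j = (\<Sum>l<n. block P (M j) l l)))
       \<and> ((\<forall>j\<in>J. M j = (\<Sum>l<n. block P (M j) l l)) \<longleftrightarrow>
            (\<forall>j\<in>J. \<forall>l<n. \<forall>l'<n. l \<noteq> l' \<longrightarrow> block P (M j) l l' = 0))"
  using kraus_channel_multi_block_PCDS_iff[OF assms]
    block_diagonal_iff_off_diagonal_blocks_zero[OF assms(1)]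
  by blast

end
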